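(* Let $M \ge 3$ and $K \ge 2$ be integers, let $P_{\text{r}} > 0$, and let $\beta_1,\dots,\beta_K > 0$. Let $\mathbf{G} = \mathbf{H}\mathbf{D}^{1/2} \in \mathbb{C}^{M\times K}$, where $\mathbf{H}$ has i.i.d. $\mathcal{CN}(0,1)$ entries and $\mathbf{D} = \mathrm{diag}(\beta_1,\dots,\beta_K)$, and let $\mathbf{g}_i$ denote the $i$-th column of $\mathbf{G}$. For an integer $a$ and a positive integer $t$, let $j(a,t)$ be the unique element of $\{1,\dots,K\}$ congruent to $a+t$ modulo $K$. For $k\in\{1,\dots,K\}$ and $t \in \{1,\dots,K-1\}$, let $\mathcal{V}_{k,t} = \{j(k-t,t), j(k-t+1,t), \dots, j(k,t)\}$ and define $$\mathtt{R}^{\mathrm{dl},(t)}_{k} = \mathbb{E}\left\{\log_2\left(1 + \frac{\frac{P_{\text{r}}}{M\sum_{i=1}^K \beta_i}\|\mathbf{g}_k\|^4}{\frac{P_{\text{r}}}{M\sum_{i=1}^K \beta_i}\sum_{i\in\{1,\dots,K\}:\, j(i,t)\notin\mathcal{V}_{k,t}} |\mathbf{g}_k^H\mathbf{g}_i|^2 + 1}\right)\right\},$$ the expectation being over $\mathbf{G}$. Then $$\mathtt{R}^{\mathrm{dl},(t)}_{k} \ \ge\ \log_2\left(1 + \frac{P_{\text{r}}(M-1)(M-2)\beta_k^2}{P_{\text{r}}(M-2)\beta_k\sum_{i\in\{1,\dots,K\}:\, j(i,t)\notin\mathcal{V}_{k,t}}\beta_i + M\sum_{i=1}^K\beta_i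}\right).$$
   Context: Model: a decode-and-forward multi-way relay with an $M$-antenna relay and $K$ single-antenna users using successive cancelation: in broadcast time-slot $t$ the relay sends $x_{j(k,t)}$ to user $k$, and user $k$ removes its own symbol and the symbols $x_{j(k,1)},\dots,x_{j(k,t-1)}$ decoded in earlier slots; $\mathtt{R}^{\mathrm{dl},(t)}_{k}$ is the resulting downlink spectral efficiency. $\beta_k$ are large-scale fading coefficients and $P_{\text{r}}$ is the normalized relay transmit power. *)

theory Defs
  imports "HOL-Probability.Probability"
begin

definition CN_std :: "complex measure" where
  "CN_std = density lborel (\<lambda>z. ennreal (exp (- (cmod z)\<^sup>2) / pi))"

definition H_dist :: "nat \<Rightarrow> nat \<Rightarrow> (nat \<times> nat \<Rightarrow> complex) measure" where
  "H_dist M K = PiM ({1..M} \<times> {1..K}) (\<lambda>_. CN_std)"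

definition gcol :: "(nat \<Rightarrow> real) \<Rightarrow> (nat \<times> nat \<Rightarrow> complex) \<Rightarrow> nat \<Rightarrow> nat \<Rightarrow> complex" where
  "gcol \<beta> H i m = H (m, i) * complex_of_real (sqrt (\<beta> i))"

definition gnorm2 :: "nat \<Rightarrow> (nat \<Rightarrow> real) \<Rightarrow> (nat \<times> nat \<Rightarrow> complex) \<Rightarrow> nat \<Rightarrow> real" where
  "gnorm2 M \<beta> H i = (\<Sum>m\<in>{1..M}. (cmod (gcol \<beta> H i m))\<^sup>2)"

definition ginner :: "nat \<Rightarrow> (nat \<Rightarrow> real) \<Rightarrow> (nat \<times> nat \<Rightarrow> complex) \<Rightarrow> nat \<Rightarrow> nat \<Rightarrow> complex" where
  "ginner M \<beta> H k i = (\<Sum>m\<in>{1..M}. cnj (gcol \<beta> H k m) * gcol \<beta> H i m)"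

definition jidx :: "nat \<Rightarrow> int \<Rightarrow> nat \<Rightarrow> int" where
  "jidx K a t = ((a + int t - 1) mod int K) + 1"

definition Vset :: "nat \<Rightarrow> nat \<Rightarrow> nat \<Rightarrow> int set" where
  "Vset K k t = {jidx K (int k - int t + int s) t | s. s \<le> t}"

definition interf :: "nat \<Rightarrow> nat \<Rightarrow> nat \<Rightarrow> nat set" where
  "interf K k t = {i \<in> {1..K}. jidx K (int i) t \<notin> Vset K k t}"

definition R_dl :: "nat \<Rightarrow> nat \<Rightarrow> real \<Rightarrow> (nat \<Rightarrow> real) \<Rightarrow> nat \<Rightarrow> nat \<Rightarrow> real" where
  "R_dl M K Pr \<beta> k t =
     (let \<rho> = Pr / (real M * (\<Sum>i\<in>{1..K}. \<beta> i)) in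
      \<integral>H. log 2 (1 + \<rho> * (gnorm2 M \<beta> H k)\<^sup>2 /
               (\<rho> * (\<Sum>i\<in>interf K k t. (cmod (ginner M \<beta> H k i))\<^sup>2) + 1)) \<partial>(H_dist M K))"

end

theory Submission
  imports Defs "HOL-Real_Asymp.Real_Asymp"
begin

text \<open>
  Write \<open>a = \<parallel>h\<^sub>k\<parallel>\<^sup>2\<close> and \<open>b\<^sub>i = |h\<^sub>k\<^sup>H h\<^sub>i|\<^sup>2\<close>. The rate is \<open>E log\<^sub>2 (1 + 1/u)\<close> with
  \<open>u = (\<rho> \<Sum>\<^sub>i \<beta>\<^sub>k \<beta>\<^sub>i b\<^sub>i + 1) / (\<rho> \<beta>\<^sub>k\<^sup>2 a\<^sup>2)\<close>, and \<open>u \<mapsto> log\<^sub>2 (1 + 1/u)\<close> is convex and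
  decreasing, so by Jensen it suffices to bound \<open>E u\<close> from above. Given column \<open>k\<close>, the
  variable \<open>h\<^sub>k\<^sup>H h\<^sub>i\<close> (\<open>i \<noteq> k\<close>) is Gaussian with variance \<open>a\<close>, hence \<open>E (b\<^sub>i / a\<^sup>2) = E (1/a)\<close>.
  The inverse moments of the Gamma variable \<open>a\<close> follow from \<open>1/a = \<integral>\<^sub>0\<^sup>\<infinity> e\<^sup>-\<^sup>s\<^sup>a ds\<close>,
  \<open>1/a\<^sup>2 = \<integral>\<^sub>0\<^sup>\<infinity> s e\<^sup>-\<^sup>s\<^sup>a ds\<close> and \<open>E e\<^sup>-\<^sup>s\<^sup>a = (1 + s)\<^sup>-\<^sup>M\<close>:
  \<open>E (1/a) = 1/(M - 1)\<close> and \<open>E (1/a\<^sup>2) = 1/((M - 1)(M - 2))\<close>.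
\<close>

section \<open>The standard complex Gaussian\<close>

lemma nn_integral_exp_neg_mult_sq:
  fixes c :: real assumes c: "c > 0"
  shows "(\<integral>\<^sup>+x. ennreal (exp (- c * x\<^sup>2)) \<partial>lborel) = ennreal (sqrt (pi / c))"
proof -
  define \<sigma> where "\<sigma> = sqrt (1 / (2 * c))"
  have \<sigma>_sq: "\<sigma>\<^sup>2 = 1 / (2 * c)" using c by (simp add: \<sigma>_def)
  have eq: "exp (- c * x\<^sup>2) = sqrt (pi / c) * normal_density 0 \<sigma> x" for x
    unfolding normal_density_def \<sigma>_sq using c
    by (simp add: field_simps real_sqrt_divide real_sqrt_mult)
  have "(\<integral>\<^sup>+x. ennreal (exp (- c * x\<^sup>2)) \<partial>lborel)
      = ennreal (\<integral>x. sqrt (pi / c) * normal_density 0 \<sigma> x \<partial>lborel)"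
    unfolding eq using c
    by (intro nn_integral_eq_integral integrable_mult_right integrable_normal_density AE_I2)
       (simp_all add: \<sigma>_def)
  also have "\<dots> = ennreal (sqrt (pi / c))" using c by (simp add: \<sigma>_def)
  finally show ?thesis .
qed

lemma nn_integral_sq_exp_neg_sq:
  "(\<integral>\<^sup>+x. ennreal (x\<^sup>2 * exp (- x\<^sup>2)) \<partial>lborel) = ennreal (sqrt pi / 2)"
proof -
  define \<sigma> where "\<sigma> = sqrt (1 / 2)"
  have \<sigma>_sq: "\<sigma>\<^sup>2 = 1 / 2" by (simp add: \<sigma>_def)
  have eq: "x\<^sup>2 * exp (- x\<^sup>2) = sqrt pi * (normal_density 0 \<sigma> x * (x - 0) ^ (2 * 1))" for x
    unfolding normal_density_def \<sigma>_sq
    by (simp add: field_simps real_sqrt_divide real_sqrt_mult power2_eq_square)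
  have "has_bochner_integral lborel (\<lambda>x. normal_density 0 \<sigma> x * (x - 0) ^ (2 * 1))
      (fact (2 * 1) / ((2 / \<sigma>\<^sup>2) ^ 1 * fact 1))"
    by (rule normal_moment_even) (simp add: \<sigma>_def)
  then have moment: "has_bochner_integral lborel (\<lambda>x. normal_density 0 \<sigma> x * (x - 0) ^ (2 * 1)) (1 / 2)"
    by (simp add: \<sigma>_sq)
  have "(\<integral>\<^sup>+x. ennreal (x\<^sup>2 * exp (- x\<^sup>2)) \<partial>lborel)
      = ennreal (\<integral>x. sqrt pi * (normal_density 0 \<sigma> x * (x - 0) ^ (2 * 1)) \<partial>lborel)"
    unfolding eq using moment
    by (intro nn_integral_eq_integral) (auto intro!: integrable_mult_right simp: has_bochner_integral_iff)
  also have "\<dots> = ennreal (sqrt pi / 2)"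
    using moment by (simp add: has_bochner_integral_iff)
  finally show ?thesis .
qed

lemma cmod_sq_eq_inner: "(cmod z)\<^sup>2 = (z \<bullet> 1)\<^sup>2 + (z \<bullet> \<i>)\<^sup>2"
  by (simp add: inner_complex_def cmod_power2)

lemma nn_integral_exp_neg_mult_cmod_sq:
  fixes c :: real assumes c: "c > 0"
  shows "(\<integral>\<^sup>+z. ennreal (exp (- c * (cmod z)\<^sup>2)) \<partial>(lborel::complex measure)) = ennreal (pi / c)"
proof -
  have "exp (- c * (cmod z)\<^sup>2) = exp (- c * (z \<bullet> 1)\<^sup>2) * exp (- c * (z \<bullet> \<i>)\<^sup>2)" for z
    by (simp add: cmod_sq_eq_inner algebra_simps exp_add[symmetric])
  then have "(\<integral>\<^sup>+z. ennreal (exp (- c * (cmod z)\<^sup>2)) \<partial>(lborel::complex measure))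
     = (\<integral>\<^sup>+z. (\<Prod>b\<in>Basis. ennreal (exp (- c * (z \<bullet> b)\<^sup>2))) \<partial>(lborel::complex measure))"
    by (simp add: Basis_complex_def ennreal_mult)
  also have "\<dots> = (\<Prod>b\<in>(Basis::complex set). (\<integral>\<^sup>+x. ennreal (exp (- c * x\<^sup>2)) \<partial>lborel))"
    by (rule nn_integral_lborel_prod) auto
  also have "\<dots> = ennreal (sqrt (pi / c)) * ennreal (sqrt (pi / c))"
    using nn_integral_exp_neg_mult_sq[OF c] by (simp add: Basis_complex_def)
  also have "\<dots> = ennreal (pi / c)"
    using c by (simp add: ennreal_mult[symmetric])
  finally show ?thesis .
qed

lemma nn_integral_cmod_sq_exp_neg_cmod_sq:
  "(\<integral>\<^sup>+z. ennreal ((cmod z)\<^sup>2 * exp (- (cmod z)\<^sup>2)) \<partial>(lborel::complex measure)) = ennreal pi"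
proof -
  let ?f = "\<lambda>d b x. ennreal (exp (- x\<^sup>2) * (if b = d then x\<^sup>2 else 1))"
  have "(\<integral>\<^sup>+z. ennreal ((cmod z)\<^sup>2 * exp (- (cmod z)\<^sup>2)) \<partial>(lborel::complex measure))
     = (\<integral>\<^sup>+z. (\<Prod>b\<in>Basis. ?f 1 b (z \<bullet> b)) + (\<Prod>b\<in>Basis. ?f \<i> b (z \<bullet> b)) \<partial>(lborel::complex measure))"
    by (intro nn_integral_cong)
       (simp add: Basis_complex_def cmod_sq_eq_inner algebra_simps exp_add[symmetric]
          ennreal_mult[symmetric] ennreal_plus[symmetric] del: ennreal_plus)
  also have "\<dots> = (\<integral>\<^sup>+z. (\<Prod>b\<in>Basis. ?f 1 b (z \<bullet> b)) \<partial>(lborel::complex measure))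
      + (\<integral>\<^sup>+z. (\<Prod>b\<in>Basis. ?f \<i> b (z \<bullet> b)) \<partial>(lborel::complex measure))"
    by (rule nn_integral_add) auto
  also have "\<dots> = (\<Prod>b\<in>(Basis::complex set). (\<integral>\<^sup>+x. ?f 1 b x \<partial>lborel))
      + (\<Prod>b\<in>(Basis::complex set). (\<integral>\<^sup>+x. ?f \<i> b x \<partial>lborel))"
    by (intro arg_cong2[where f="(+)"] nn_integral_lborel_prod) auto
  also have "\<dots> = ennreal pi"
    using nn_integral_exp_neg_mult_sq[of 1] nn_integral_sq_exp_neg_sq
    by (simp add: Basis_complex_def ennreal_mult[symmetric] ennreal_plus[symmetric] mult.commute
        del: ennreal_plus)
  finally show ?thesis .
qed

lemma nn_integral_CN_std:
  assumes [measurable]: "f \<in> borel_measurable borel"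
  shows "(\<integral>\<^sup>+z. f z \<partial>CN_std) = (\<integral>\<^sup>+z. ennreal (exp (- (cmod z)\<^sup>2) / pi) * f z \<partial>lborel)"
  unfolding CN_std_def by (rule nn_integral_density) auto

lemma sets_CN_std [simp, measurable_cong]: "sets CN_std = sets borel"
  by (simp add: CN_std_def)

lemma space_CN_std [simp]: "space CN_std = UNIV"
  by (simp add: CN_std_def)

lemma nn_integral_CN_std_exp:
  assumes s: "s \<ge> 0"
  shows "(\<integral>\<^sup>+z. ennreal (exp (- s * (cmod z)\<^sup>2)) \<partial>CN_std) = ennreal (1 / (1 + s))"
proof -
  have "(\<integral>\<^sup>+z. ennreal (exp (- s * (cmod z)\<^sup>2)) \<partial>CN_std)
     = (\<integral>\<^sup>+z. ennreal (exp (- (1 + s) * (cmod z)\<^sup>2)) * ennreal (1 / pi) \<partial>lborel)"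
    by (subst nn_integral_CN_std)
       (auto intro!: nn_integral_cong simp: ennreal_mult[symmetric] algebra_simps exp_add[symmetric])
  also have "\<dots> = ennreal (pi / (1 + s)) * ennreal (1 / pi)"
    using nn_integral_exp_neg_mult_cmod_sq[of "1 + s"] s by (simp add: nn_integral_multc)
  also have "\<dots> = ennreal (1 / (1 + s))"
    using s by (simp add: ennreal_mult[symmetric])
  finally show ?thesis .
qed

lemma prob_space_CN_std: "prob_space CN_std"
  by standard (use nn_integral_CN_std_exp[of 0] in simp)

lemma emeasure_CN_std_UNIV [simp]: "emeasure CN_std UNIV = 1"
  using prob_space.emeasure_space_1[OF prob_space_CN_std] by simp

lemma nn_integral_CN_std_cmod_sq: "(\<integral>\<^sup>+z. ennreal ((cmod z)\<^sup>2) \<partial>CN_std) = 1"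
proof -
  have "(\<integral>\<^sup>+z. ennreal ((cmod z)\<^sup>2) \<partial>CN_std)
     = (\<integral>\<^sup>+z. ennreal ((cmod z)\<^sup>2 * exp (- (cmod z)\<^sup>2)) * ennreal (1 / pi) \<partial>lborel)"
    by (subst nn_integral_CN_std) (auto intro!: nn_integral_cong simp: ennreal_mult[symmetric] algebra_simps)
  also have "\<dots> = ennreal pi * ennreal (1 / pi)"
    by (subst nn_integral_multc) (auto simp: nn_integral_cmod_sq_exp_neg_cmod_sq)
  also have "\<dots> = 1"
    by (simp add: ennreal_mult[symmetric])
  finally show ?thesis .
qed

lemma nn_integral_CN_std_reflect:
  assumes [measurable]: "f \<in> borel_measurable borel"
  shows "(\<integral>\<^sup>+z. f (- z) \<partial>CN_std) = (\<integral>\<^sup>+z. f z \<partial>CN_std)"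
proof -
  let ?d = "\<lambda>z. ennreal (exp (- (cmod z)\<^sup>2) / pi)"
  have lborel_reflect: "distr lborel borel uminus = (lborel :: complex measure)"
    using lborel_affine[of "-1" "0::complex"] by (simp add: density_1)
  have "(\<integral>\<^sup>+z. f z \<partial>CN_std) = (\<integral>\<^sup>+z. ?d z * f z \<partial>distr lborel borel uminus)"
    by (simp add: nn_integral_CN_std lborel_reflect)
  also have "\<dots> = (\<integral>\<^sup>+z. ?d (- z) * f (- z) \<partial>lborel)"
    by (rule nn_integral_distr) auto
  also have "\<dots> = (\<integral>\<^sup>+z. f (- z) \<partial>CN_std)"
    by (subst nn_integral_CN_std) auto
  finally show ?thesis ..
qed

text \<open>The reflection \<open>z \<mapsto> -z\<close> cancels the cross term, so no first moment is needed.\<close>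

lemma nn_integral_CN_std_affine:
  "(\<integral>\<^sup>+z. ennreal ((cmod (c * z + v))\<^sup>2) \<partial>CN_std) = ennreal ((cmod c)\<^sup>2 + (cmod v)\<^sup>2)"
proof -
  let ?X = "\<integral>\<^sup>+z. ennreal ((cmod (c * z + v))\<^sup>2) \<partial>CN_std"
  have parallelogram: "(cmod (c * z + v))\<^sup>2 + (cmod (v - c * z))\<^sup>2
      = 2 * (cmod c)\<^sup>2 * (cmod z)\<^sup>2 + 2 * (cmod v)\<^sup>2" for z
  proof -
    have "(cmod (w + v))\<^sup>2 + (cmod (- w + v))\<^sup>2 = 2 * (cmod w)\<^sup>2 + 2 * (cmod v)\<^sup>2" for w
      by (simp only: cmod_power2) (simp add: algebra_simps power2_eq_square)
    from this[of "c * z"] show ?thesis by (simp add: norm_mult power_mult_distrib)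
  qed
  have "?X + ?X = (\<integral>\<^sup>+z. ennreal ((cmod (c * z + v))\<^sup>2) + ennreal ((cmod (c * (- z) + v))\<^sup>2) \<partial>CN_std)"
    by (subst nn_integral_CN_std_reflect[symmetric, where f="\<lambda>z. ennreal ((cmod (c * z + v))\<^sup>2)"])
       (auto intro: nn_integral_add[symmetric])
  also have "\<dots> = (\<integral>\<^sup>+z. ennreal (2 * (cmod c)\<^sup>2) * ennreal ((cmod z)\<^sup>2) + ennreal (2 * (cmod v)\<^sup>2) \<partial>CN_std)"
    by (intro nn_integral_cong)
       (simp add: parallelogram ennreal_mult[symmetric] ennreal_plus[symmetric] del: ennreal_plus)
  also have "\<dots> = ennreal (2 * (cmod c)\<^sup>2) + ennreal (2 * (cmod v)\<^sup>2)"
    by (subst nn_integral_add) (auto simp: nn_integral_cmult nn_integral_CN_std_cmod_sq)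
  also have "\<dots> = ennreal ((cmod c)\<^sup>2 + (cmod v)\<^sup>2) + ennreal ((cmod c)\<^sup>2 + (cmod v)\<^sup>2)"
    by (simp add: ennreal_plus[symmetric] del: ennreal_plus)
  finally have "2 * ?X = 2 * ennreal ((cmod c)\<^sup>2 + (cmod v)\<^sup>2)"
    by (simp only: mult_2)
  then show ?thesis by (subst (asm) ennreal_mult_cancel_left) simp_all
qed

section \<open>Columns of an i.i.d. Gaussian matrix\<close>

lemma product_sigma_finite_CN_std: "product_sigma_finite (\<lambda>_::'i. CN_std)"
  unfolding product_sigma_finite_def by (auto intro: prob_space_imp_sigma_finite prob_space_CN_std)

lemma prob_space_PiM_CN_std: "prob_space (PiM J (\<lambda>_::'i. CN_std))"
  by (rule prob_space_PiM) (rule prob_space_CN_std)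

lemma prob_space_H_dist: "prob_space (H_dist M K)"
  unfolding H_dist_def by (rule prob_space_PiM_CN_std)

lemma measurable_PiM_CN_std_component:
  assumes "m \<in> J"
  shows "(\<lambda>y. y m) \<in> borel_measurable (PiM J (\<lambda>_::'i. CN_std))"
proof -
  have "measurable (PiM J (\<lambda>_::'i. CN_std)) CN_std = borel_measurable (PiM J (\<lambda>_::'i. CN_std))"
    by (rule measurable_cong_sets) auto
  with measurable_component_singleton[OF assms] show ?thesis by blast
qed

lemma measurable_H_dist_entry:
  "m \<in> {1..M} \<Longrightarrow> j \<in> {1..K} \<Longrightarrow> (\<lambda>H. H (m, j)) \<in> borel_measurable (H_dist M K)"
  unfolding H_dist_def by (rule measurable_PiM_CN_std_component) auto

lemma borel_measurable_cnj [measurable (raw)]: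
  "f \<in> borel_measurable M \<Longrightarrow> (\<lambda>x. cnj (f x)) \<in> borel_measurable M"
  by (rule borel_measurable_continuous_on[where f=cnj]) (auto intro: continuous_intros)

lemma borel_measurable_PiM_CN_std_linear:
  "S \<subseteq> J \<Longrightarrow> (\<lambda>y. \<Sum>m\<in>S. c m * y m) \<in> borel_measurable (PiM J (\<lambda>_::'i. CN_std))"
  by (intro borel_measurable_sum borel_measurable_times borel_measurable_const
      measurable_PiM_CN_std_component) auto

lemma nn_integral_PiM_CN_std_linear:
  fixes c :: "'i \<Rightarrow> complex"
  assumes "finite J" "S \<subseteq> J"
  shows "(\<integral>\<^sup>+y. ennreal ((cmod (\<Sum>m\<in>S. c m * y m))\<^sup>2) \<partial>PiM J (\<lambda>_. CN_std))
    = ennreal (\<Sum>m\<in>S. (cmod (c m))\<^sup>2)"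
  using assms
proof (induction J arbitrary: S rule: finite_induct)
  case empty
  then show ?case by simp
next
  case (insert p J)
  interpret product_sigma_finite "\<lambda>_::'i. CN_std" by (rule product_sigma_finite_CN_std)
  have "(\<lambda>y. ennreal ((cmod (\<Sum>m\<in>S. c m * y m))\<^sup>2)) \<in> borel_measurable (PiM (insert p J) (\<lambda>_. CN_std))"
    using borel_measurable_PiM_CN_std_linear[OF insert.prems, of c] by measurable
  then have "(\<integral>\<^sup>+y. ennreal ((cmod (\<Sum>m\<in>S. c m * y m))\<^sup>2) \<partial>PiM (insert p J) (\<lambda>_. CN_std))
     = (\<integral>\<^sup>+x. (\<integral>\<^sup>+y. ennreal ((cmod (\<Sum>m\<in>S. c m * (x(p := y)) m))\<^sup>2) \<partial>CN_std) \<partial>PiM J (\<lambda>_. CN_std))"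
    by (rule product_nn_integral_insert[OF insert.hyps(1,2)])
  also have "\<dots> = ennreal (\<Sum>m\<in>S. (cmod (c m))\<^sup>2)"
  proof (cases "p \<in> S")
    case True
    have S': "S - {p} \<subseteq> J" and fin: "finite S"
      using insert.prems insert.hyps by (auto intro: finite_subset)
    have split: "(\<Sum>m\<in>S. c m * (x(p := y)) m) = c p * y + (\<Sum>m\<in>S - {p}. c m * x m)" for x y
    proof -
      have "(\<Sum>m\<in>S - {p}. c m * (x(p := y)) m) = (\<Sum>m\<in>S - {p}. c m * x m)"
        by (intro sum.cong) auto
      with True fin show ?thesis by (simp add: sum.remove[of S p])
    qed
    have "(\<integral>\<^sup>+x. (\<integral>\<^sup>+y. ennreal ((cmod (\<Sum>m\<in>S. c m * (x(p := y)) m))\<^sup>2) \<partial>CN_std) \<partial>PiM J (\<lambda>_. CN_std))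
        = (\<integral>\<^sup>+x. ennreal ((cmod (c p))\<^sup>2) + ennreal ((cmod (\<Sum>m\<in>S - {p}. c m * x m))\<^sup>2) \<partial>PiM J (\<lambda>_. CN_std))"
      by (intro nn_integral_cong) (simp only: split nn_integral_CN_std_affine, simp)
    also have "\<dots> = ennreal ((cmod (c p))\<^sup>2) + ennreal (\<Sum>m\<in>S - {p}. (cmod (c m))\<^sup>2)"
      using borel_measurable_PiM_CN_std_linear[OF S', of c] by (subst nn_integral_add)
        (auto simp: insert.IH[OF S'] prob_space.emeasure_space_1[OF prob_space_PiM_CN_std])
    also have "\<dots> = ennreal (\<Sum>m\<in>S. (cmod (c m))\<^sup>2)"
      using True fin by (simp add: sum.remove[of S p] ennreal_plus sum_nonneg)
    finally show ?thesis .
  next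
    case False
    have "(\<Sum>m\<in>S. c m * (x(p := y)) m) = (\<Sum>m\<in>S. c m * x m)" for x y
      using False by (intro sum.cong) auto
    moreover have "S \<subseteq> J" using False insert.prems by auto
    ultimately show ?thesis by (simp only:) (simp add: insert.IH)
  qed
  finally show ?case .
qed

definition col_sqnorm :: "nat \<Rightarrow> nat \<Rightarrow> (nat \<times> nat \<Rightarrow> complex) \<Rightarrow> real" where
  "col_sqnorm M k H = (\<Sum>m\<in>{1..M}. (cmod (H (m, k)))\<^sup>2)"

definition col_inner_sqnorm :: "nat \<Rightarrow> nat \<Rightarrow> nat \<Rightarrow> (nat \<times> nat \<Rightarrow> complex) \<Rightarrow> real" where
  "col_inner_sqnorm M k i H = (cmod (\<Sum>m\<in>{1..M}. cnj (H (m, k)) * H (m, i)))\<^sup>2"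

lemma col_sqnorm_nonneg: "col_sqnorm M k H \<ge> 0"
  unfolding col_sqnorm_def by (intro sum_nonneg) auto

lemma col_inner_sqnorm_nonneg: "col_inner_sqnorm M k i H \<ge> 0"
  by (simp add: col_inner_sqnorm_def)

lemma measurable_col_sqnorm:
  "k \<in> {1..K} \<Longrightarrow> col_sqnorm M k \<in> borel_measurable (H_dist M K)"
  unfolding col_sqnorm_def[abs_def] using measurable_H_dist_entry[of _ M k K]
  by (intro borel_measurable_sum) measurable

lemma measurable_col_inner_sqnorm:
  assumes "k \<in> {1..K}" "i \<in> {1..K}"
  shows "col_inner_sqnorm M k i \<in> borel_measurable (H_dist M K)"
proof -
  have "(\<lambda>H. \<Sum>m\<in>{1..M}. cnj (H (m, k)) * H (m, i)) \<in> borel_measurable (H_dist M K)"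
    using assms measurable_H_dist_entry[of _ M k K] measurable_H_dist_entry[of _ M i K]
    by (intro borel_measurable_sum) measurable
  then show ?thesis unfolding col_inner_sqnorm_def[abs_def] by measurable
qed

lemma gnorm2_eq_col_sqnorm: "\<beta> k \<ge> 0 \<Longrightarrow> gnorm2 M \<beta> H k = \<beta> k * col_sqnorm M k H"
  unfolding gnorm2_def col_sqnorm_def gcol_def
  by (simp add: sum_distrib_left norm_mult power_mult_distrib mult.commute)

lemma cmod_ginner_sq_eq_col_inner_sqnorm:
  assumes "\<beta> k \<ge> 0" "\<beta> i \<ge> 0"
  shows "(cmod (ginner M \<beta> H k i))\<^sup>2 = \<beta> k * \<beta> i * col_inner_sqnorm M k i H"
proof -
  have "ginner M \<beta> H k i
      = complex_of_real (sqrt (\<beta> k) * sqrt (\<beta> i)) * (\<Sum>m\<in>{1..M}. cnj (H (m, k)) * H (m, i))"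
    unfolding ginner_def gcol_def by (simp add: sum_distrib_left algebra_simps)
  then show ?thesis
    using assms by (simp add: col_inner_sqnorm_def norm_mult power_mult_distrib)
qed

lemma sum_Times_singleton: "(\<Sum>z\<in>A \<times> {i}. g z) = (\<Sum>m\<in>A. g (m, i))"
proof -
  have "A \<times> {i} = (\<lambda>m. (m, i)) ` A" by auto
  then show ?thesis by (simp add: sum.reindex inj_on_def)
qed

lemma prod_Times_if_snd:
  assumes "finite A" "finite B" "k \<in> B"
  shows "(\<Prod>x\<in>A \<times> B. if snd x = k then g x else 1) = (\<Prod>m\<in>A. g (m, k))"
proof -
  have "(\<Prod>x\<in>A \<times> B. if snd x = k then g x else 1) = (\<Prod>x\<in>{x\<in>A \<times> B. snd x = k}. g x)"
    using assms by (intro prod.inter_filter[symmetric]) simp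
  also have "{x\<in>A \<times> B. snd x = k} = (\<lambda>m. (m, k)) ` A" using assms by auto
  finally show ?thesis by (simp add: prod.reindex inj_on_def)
qed

lemma nn_integral_exp_col_sqnorm:
  assumes k: "k \<in> {1..K}" and s: "s \<ge> 0"
  shows "(\<integral>\<^sup>+H. ennreal (exp (- s * col_sqnorm M k H)) \<partial>H_dist M K) = ennreal (1 / (1 + s) ^ M)"
proof -
  interpret product_sigma_finite "\<lambda>_::nat \<times> nat. CN_std" by (rule product_sigma_finite_CN_std)
  let ?f = "\<lambda>x::nat \<times> nat. \<lambda>z. ennreal (if snd x = k then exp (- s * (cmod z)\<^sup>2) else 1)"
  have "ennreal (exp (- s * col_sqnorm M k H)) = (\<Prod>x\<in>{1..M} \<times> {1..K}. ?f x (H x))" for H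
    using k by (simp add: prod_ennreal prod_Times_if_snd col_sqnorm_def exp_sum sum_distrib_left)
  then have "(\<integral>\<^sup>+H. ennreal (exp (- s * col_sqnorm M k H)) \<partial>H_dist M K)
      = (\<Prod>x\<in>{1..M} \<times> {1..K}. integral\<^sup>N CN_std (?f x))"
    unfolding H_dist_def by (simp only:) (rule product_nn_integral_prod; simp)
  also have "\<dots> = (\<Prod>x\<in>{1..M} \<times> {1..K}. if snd x = k then ennreal (1 / (1 + s)) else 1)"
    by (intro prod.cong refl) (use nn_integral_CN_std_exp[OF s] in auto)
  also have "\<dots> = ennreal (1 / (1 + s)) ^ M"
    using k by (simp add: prod_Times_if_snd)
  also have "\<dots> = ennreal (1 / (1 + s) ^ M)"
    using s by (simp add: ennreal_power power_one_over)
  finally show ?thesis .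
qed

section \<open>Inverse moments of the column energy\<close>

text \<open>For \<open>a > 0\<close> these are \<open>1/a\<close> and \<open>1/a\<^sup>2\<close>; as integrals over \<open>s\<close> they can be exchanged
  with the expectation over the channel.\<close>

definition recip_integral :: "real \<Rightarrow> ennreal" where
  "recip_integral a = (\<integral>\<^sup>+s. ennreal (exp (- s * a)) * indicator {0..} s \<partial>lborel)"

definition recip_sq_integral :: "real \<Rightarrow> ennreal" where
  "recip_sq_integral a = (\<integral>\<^sup>+s. ennreal (s * exp (- s * a)) * indicator {0..} s \<partial>lborel)"

lemma recip_integral_eq:
  assumes a: "a > 0"
  shows "recip_integral a = ennreal (1 / a)"
proof -
  have "recip_integral a = ennreal (0 - (- exp (- 0 * a) / a))"
    unfolding recip_integral_def
  proof (rule nn_integral_FTC_atLeast)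
    show "((\<lambda>s. - exp (- s * a) / a) \<longlongrightarrow> 0) at_top" using a by real_asymp
  qed (use a in \<open>auto intro!: derivative_eq_intros simp: field_simps\<close>)
  then show ?thesis by simp
qed

lemma recip_sq_integral_eq:
  assumes a: "a > 0"
  shows "recip_sq_integral a = ennreal (1 / a\<^sup>2)"
proof -
  have "recip_sq_integral a = ennreal (0 - (- (0 / a + 1 / a\<^sup>2) * exp (- 0 * a)))"
    unfolding recip_sq_integral_def
  proof (rule nn_integral_FTC_atLeast)
    show "((\<lambda>s. - (s / a + 1 / a\<^sup>2) * exp (- s * a)) \<longlongrightarrow> 0) at_top" using a by real_asymp
  qed (use a in \<open>auto intro!: derivative_eq_intros simp: field_simps power2_eq_square\<close>)
  then show ?thesis by simp
qed

lemma recip_integral_0: "recip_integral 0 = \<infinity>"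
proof -
  have "real n \<le> emeasure lborel {0::real..}" for n
    using emeasure_mono[of "{0..real n}" "{0::real..}" lborel] by auto
  then have "(SUP n. of_nat n :: ennreal) \<le> emeasure lborel {0::real..}"
    by (intro SUP_least) (simp add: ennreal_of_nat_eq_real_of_nat)
  then show ?thesis
    by (simp add: recip_integral_def ennreal_SUP_of_nat_eq_top top_unique)
qed

lemma mult_recip_sq_integral_le: "a \<ge> 0 \<Longrightarrow> ennreal a * recip_sq_integral a \<le> recip_integral a"
  by (cases "a = 0")
     (simp_all add: recip_integral_0 recip_integral_eq recip_sq_integral_eq
        ennreal_mult[symmetric] power2_eq_square)

lemma borel_measurable_recip_integral [measurable]: "recip_integral \<in> borel_measurable borel"
  unfolding recip_integral_def[abs_def] by measurable

lemma borel_measurable_recip_sq_integral [measurable]: "recip_sq_integral \<in> borel_measurable borel"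
  unfolding recip_sq_integral_def[abs_def] by measurable

lemma tendsto_inverse_power_one_plus: "n > 0 \<Longrightarrow> ((\<lambda>s::real. 1 / (1 + s) ^ n) \<longlongrightarrow> 0) at_top"
  by (intro tendsto_divide_0[OF tendsto_const] filterlim_at_top_imp_at_infinity
      filterlim_pow_at_top filterlim_tendsto_add_at_top[OF tendsto_const filterlim_ident]) auto

lemma DERIV_inverse_power_one_plus:
  fixes x :: real assumes x: "x > -1"
  shows "DERIV (\<lambda>s. 1 / (1 + s) ^ n) x :> - real n / (1 + x) ^ Suc n"
proof -
  have p: "1 + x > 0" using x by simp
  have "DERIV (\<lambda>s. (1 + s) ^ n) x :> real n * (1 + x) ^ (n - 1)"
    by (auto intro!: derivative_eq_intros)
  from DERIV_inverse_fun[OF this] p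
  have D: "DERIV (\<lambda>s. inverse ((1 + s) ^ n)) x :> - (real n * (1 + x) ^ (n - 1) * inverse (((1 + x) ^ n) ^ Suc (Suc 0)))"
    by simp
  have eq: "real n * y ^ (n - 1) * inverse ((y ^ n) ^ Suc (Suc 0)) = real n / y ^ Suc n"
    if "y > 0" for y :: real
    using that by (cases n) (simp_all add: field_simps)
  show ?thesis using D unfolding eq[OF p] by (simp add: inverse_eq_divide)
qed

lemma nn_integral_inverse_power_one_plus:
  assumes n: "n > 0"
  shows "(\<integral>\<^sup>+s. ennreal (1 / (1 + s) ^ Suc n) * indicator {0..} s \<partial>lborel) = ennreal (1 / real n)"
proof -
  have "(\<integral>\<^sup>+s. ennreal (1 / (1 + s) ^ Suc n) * indicator {0..} s \<partial>lborel)
      = 0 - (- 1 / real n * (1 / (1 + 0) ^ n))"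
  proof (rule nn_integral_FTC_atLeast)
    show "((\<lambda>s. - 1 / real n * (1 / (1 + s) ^ n)) \<longlongrightarrow> 0) at_top"
      using tendsto_inverse_power_one_plus[OF n] by (rule tendsto_mult_right_zero)
    fix x :: real assume "0 \<le> x"
    then have "DERIV (\<lambda>s. - 1 / real n * (1 / (1 + s) ^ n)) x :> - 1 / real n * (- real n / (1 + x) ^ Suc n)"
      by (intro DERIV_cmult DERIV_inverse_power_one_plus) simp
    then show "DERIV (\<lambda>s. - 1 / real n * (1 / (1 + s) ^ n)) x :> 1 / (1 + x) ^ Suc n"
      using n by simp
  qed auto
  then show ?thesis by simp
qed

lemma nn_integral_mult_inverse_power_one_plus:
  assumes n: "n > 0"
  shows "(\<integral>\<^sup>+s. ennreal (s / (1 + s) ^ Suc (Suc n)) * indicator {0..} s \<partial>lborel)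
    = ennreal (1 / (real n * (real n + 1)))"
proof -
  let ?I = "\<lambda>f. \<integral>\<^sup>+s. ennreal (f s) * indicator {0..} s \<partial>lborel"
  have split: "1 / (1 + s) ^ Suc n = s / (1 + s) ^ Suc (Suc n) + 1 / (1 + s) ^ Suc (Suc n)"
    for s :: real
  proof -
    have "s / (1 + s) ^ Suc (Suc n) + 1 / (1 + s) ^ Suc (Suc n) = (1 + s) / ((1 + s) * (1 + s) ^ Suc n)"
      by (simp add: add_divide_distrib[symmetric] add.commute)
    then show ?thesis by (cases "1 + s = 0") simp_all
  qed
  have "1 / (real n * (real n + 1)) + 1 / (real n + 1) = 1 / real n"
    using n by (simp add: divide_simps)
  then have "ennreal (1 / (real n * (real n + 1))) + ennreal (1 / (real n + 1)) = ennreal (1 / real n)"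
    by (simp add: ennreal_plus[symmetric] del: ennreal_plus)
  also have "\<dots> = ?I (\<lambda>s. 1 / (1 + s) ^ Suc n)"
    by (rule nn_integral_inverse_power_one_plus[OF n, symmetric])
  also have "\<dots> = (\<integral>\<^sup>+s. ennreal (s / (1 + s) ^ Suc (Suc n)) * indicator {0..} s
      + ennreal (1 / (1 + s) ^ Suc (Suc n)) * indicator {0..} s \<partial>lborel)"
    by (intro nn_integral_cong) (simp only: split, auto split: split_indicator)
  also have "\<dots> = ?I (\<lambda>s. s / (1 + s) ^ Suc (Suc n)) + ?I (\<lambda>s. 1 / (1 + s) ^ Suc (Suc n))"
    by (rule nn_integral_add) auto
  also have "\<dots> = ?I (\<lambda>s. s / (1 + s) ^ Suc (Suc n)) + ennreal (1 / (real n + 1))"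
    using nn_integral_inverse_power_one_plus[of "Suc n"] by simp
  finally show ?thesis
    by (simp add: ennreal_add_left_cancel add.commute[of _ "ennreal (1 / (real n + 1))"])
qed

lemma pair_sigma_finite_H_dist_lborel: "pair_sigma_finite (H_dist M K) (lborel::real measure)"
  by (intro pair_sigma_finite.intro prob_space_imp_sigma_finite prob_space_H_dist sigma_finite_lborel)

lemma nn_integral_recip_integral_col_sqnorm:
  assumes M: "M \<ge> 2" and k: "k \<in> {1..K}"
  shows "(\<integral>\<^sup>+H. recip_integral (col_sqnorm M k H) \<partial>H_dist M K) = ennreal (1 / (real M - 1))"
proof -
  interpret pair_sigma_finite "H_dist M K" "lborel::real measure"
    by (rule pair_sigma_finite_H_dist_lborel)
  note [measurable] = measurable_col_sqnorm[OF k]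
  obtain n where n: "M = Suc n" "n > 0" using M by (cases M) auto
  have "(\<integral>\<^sup>+H. recip_integral (col_sqnorm M k H) \<partial>H_dist M K)
      = (\<integral>\<^sup>+s. (\<integral>\<^sup>+H. ennreal (exp (- s * col_sqnorm M k H)) * indicator {0..} s \<partial>H_dist M K) \<partial>lborel)"
    unfolding recip_integral_def by (rule Fubini'[symmetric]) measurable
  also have "\<dots> = (\<integral>\<^sup>+s. ennreal (1 / (1 + s) ^ M) * indicator {0..} s \<partial>lborel)"
    by (intro nn_integral_cong, subst nn_integral_multc)
       (use nn_integral_exp_col_sqnorm[OF k] in \<open>auto split: split_indicator\<close>)
  also have "\<dots> = ennreal (1 / (real M - 1))"
    using nn_integral_inverse_power_one_plus[OF n(2)] n(1) by simp
  finally show ?thesis .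
qed

lemma nn_integral_recip_sq_integral_col_sqnorm:
  assumes M: "M \<ge> 3" and k: "k \<in> {1..K}"
  shows "(\<integral>\<^sup>+H. recip_sq_integral (col_sqnorm M k H) \<partial>H_dist M K)
    = ennreal (1 / ((real M - 1) * (real M - 2)))"
proof -
  interpret pair_sigma_finite "H_dist M K" "lborel::real measure"
    by (rule pair_sigma_finite_H_dist_lborel)
  note [measurable] = measurable_col_sqnorm[OF k]
  obtain n where n: "M = Suc (Suc n)" "n > 0" using M by (cases M; cases "M - 1") auto
  have "(\<integral>\<^sup>+H. recip_sq_integral (col_sqnorm M k H) \<partial>H_dist M K)
      = (\<integral>\<^sup>+s. (\<integral>\<^sup>+H. ennreal (s * exp (- s * col_sqnorm M k H)) * indicator {0..} s \<partial>H_dist M K) \<partial>lborel)"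
    unfolding recip_sq_integral_def by (rule Fubini'[symmetric]) measurable
  also have "\<dots> = (\<integral>\<^sup>+s. ennreal (s / (1 + s) ^ M) * indicator {0..} s \<partial>lborel)"
  proof (intro nn_integral_cong)
    fix s :: real
    show "(\<integral>\<^sup>+H. ennreal (s * exp (- s * col_sqnorm M k H)) * indicator {0..} s \<partial>H_dist M K)
        = ennreal (s / (1 + s) ^ M) * indicator {0..} s"
    proof (cases "s \<ge> 0")
      case True
      have "(\<integral>\<^sup>+H. ennreal (s * exp (- s * col_sqnorm M k H)) * indicator {0..} s \<partial>H_dist M K)
          = (\<integral>\<^sup>+H. ennreal s * ennreal (exp (- s * col_sqnorm M k H)) \<partial>H_dist M K)"
        using True by (intro nn_integral_cong) (simp add: ennreal_mult)
      also have "\<dots> = ennreal s * ennreal (1 / (1 + s) ^ M)"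
        using nn_integral_exp_col_sqnorm[OF k True] by (subst nn_integral_cmult) auto
      also have "\<dots> = ennreal (s / (1 + s) ^ M) * indicator {0..} s"
        using True by (simp add: ennreal_mult[symmetric])
      finally show ?thesis .
    qed simp
  qed
  also have "\<dots> = ennreal (1 / ((real M - 1) * (real M - 2)))"
    using nn_integral_mult_inverse_power_one_plus[OF n(2)] n(1) by (simp add: mult.commute)
  finally show ?thesis .
qed

lemma AE_col_sqnorm_pos:
  assumes M: "M \<ge> 2" and k: "k \<in> {1..K}"
  shows "AE H in H_dist M K. col_sqnorm M k H > 0"
proof -
  note [measurable] = measurable_col_sqnorm[OF k]
  have "AE H in H_dist M K. recip_integral (col_sqnorm M k H) \<noteq> \<infinity>"
    using nn_integral_recip_integral_col_sqnorm[OF assms] by (intro nn_integral_PInf_AE) auto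
  then show ?thesis
    by (rule eventually_mono) (use recip_integral_0 col_sqnorm_nonneg in \<open>force simp: le_less\<close>)
qed

lemma col_norms_merge:
  assumes C: "C = {1..M} \<times> {i}" and R: "R = {1..M} \<times> {1..K} - C"
    and k: "k \<in> {1..K}" and i: "i \<noteq> k"
  shows "col_sqnorm M k (merge R C (x, y)) = col_sqnorm M k x"
    and "col_inner_sqnorm M k i (merge R C (x, y)) = (cmod (\<Sum>z\<in>C. cnj (x (fst z, k)) * y z))\<^sup>2"
proof -
  have merge_k: "merge R C (x, y) (m, k) = x (m, k)" if "m \<in> {1..M}" for m
    using that k i by (simp add: merge_def R C)
  then show "col_sqnorm M k (merge R C (x, y)) = col_sqnorm M k x"
    unfolding col_sqnorm_def by (intro sum.cong refl) simp
  have "(\<Sum>m\<in>{1..M}. cnj (merge R C (x, y) (m, k)) * merge R C (x, y) (m, i))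
      = (\<Sum>m\<in>{1..M}. cnj (x (m, k)) * y (m, i))"
    by (intro sum.cong refl) (simp add: merge_k, simp add: merge_def R C)
  then show "col_inner_sqnorm M k i (merge R C (x, y)) = (cmod (\<Sum>z\<in>C. cnj (x (fst z, k)) * y z))\<^sup>2"
    by (simp add: col_inner_sqnorm_def C sum_Times_singleton)
qed

text \<open>Integrating out column \<open>i\<close> first: given \<open>h\<^sub>k\<close>, \<open>h\<^sub>k\<^sup>H h\<^sub>i\<close> is a linear form in the
  entries of \<open>h\<^sub>i\<close> with mean square \<open>\<parallel>h\<^sub>k\<parallel>\<^sup>2\<close>.\<close>

lemma nn_integral_col_inner_sqnorm_mult:
  assumes k: "k \<in> {1..K}" and i: "i \<in> {1..K}" "i \<noteq> k"
    and f [measurable]: "f \<in> borel_measurable borel"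
  shows "(\<integral>\<^sup>+H. ennreal (col_inner_sqnorm M k i H) * f (col_sqnorm M k H) \<partial>H_dist M K)
    = (\<integral>\<^sup>+H. ennreal (col_sqnorm M k H) * f (col_sqnorm M k H) \<partial>H_dist M K)"
proof -
  interpret product_sigma_finite "\<lambda>_::nat \<times> nat. CN_std" by (rule product_sigma_finite_CN_std)
  define C where "C = {1..M} \<times> {i}"
  define R where "R = {1..M} \<times> {1..K} - C"
  have "R \<union> C = {1..M} \<times> {1..K}"
    using i by (auto simp: R_def C_def)
  then have H_dist: "H_dist M K = PiM (R \<union> C) (\<lambda>_. CN_std)"
    by (simp add: H_dist_def)
  have disj: "R \<inter> C = {}" and fin: "finite R" "finite C"
    by (auto simp: R_def C_def)
  note merge = col_norms_merge[OF C_def R_def k i(2)]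
  have [measurable]: "col_sqnorm M k \<in> borel_measurable (PiM (R \<union> C) (\<lambda>_. CN_std))"
    using measurable_col_sqnorm[OF k, of M] by (simp only: H_dist)
  have [measurable]: "col_inner_sqnorm M k i \<in> borel_measurable (PiM (R \<union> C) (\<lambda>_. CN_std))"
    using measurable_col_inner_sqnorm[OF k i(1), of M] by (simp only: H_dist)
  have "(\<integral>\<^sup>+H. ennreal (col_inner_sqnorm M k i H) * f (col_sqnorm M k H) \<partial>H_dist M K)
      = (\<integral>\<^sup>+x. (\<integral>\<^sup>+y. ennreal ((cmod (\<Sum>z\<in>C. cnj (x (fst z, k)) * y z))\<^sup>2) * f (col_sqnorm M k x)
          \<partial>PiM C (\<lambda>_. CN_std)) \<partial>PiM R (\<lambda>_. CN_std))"
    unfolding H_dist by (subst product_nn_integral_fold[OF disj fin])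
      (simp_all add: merge)
  also have "\<dots> = (\<integral>\<^sup>+x. ennreal (col_sqnorm M k x) * f (col_sqnorm M k x) \<partial>PiM R (\<lambda>_. CN_std))"
  proof (intro nn_integral_cong)
    fix x :: "nat \<times> nat \<Rightarrow> complex"
    have "(\<Sum>z\<in>C. (cmod (cnj (x (fst z, k))))\<^sup>2) = col_sqnorm M k x"
      by (simp add: C_def col_sqnorm_def sum_Times_singleton)
    then show "(\<integral>\<^sup>+y. ennreal ((cmod (\<Sum>z\<in>C. cnj (x (fst z, k)) * y z))\<^sup>2) * f (col_sqnorm M k x)
        \<partial>PiM C (\<lambda>_. CN_std)) = ennreal (col_sqnorm M k x) * f (col_sqnorm M k x)"
      using borel_measurable_PiM_CN_std_linear[of C C "\<lambda>z. cnj (x (fst z, k))"]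
      by (subst nn_integral_multc) (auto simp: nn_integral_PiM_CN_std_linear fin)
  qed
  also have "\<dots> = (\<integral>\<^sup>+H. ennreal (col_sqnorm M k H) * f (col_sqnorm M k H) \<partial>H_dist M K)"
    unfolding H_dist by (subst product_nn_integral_fold[OF disj fin])
      (simp_all add: merge prob_space.emeasure_space_1[OF prob_space_PiM_CN_std])
  finally show ?thesis .
qed

section \<open>The rate bound\<close>

lemma ln_one_plus_inverse_ge_tangent:
  fixes u u0 :: real assumes u: "u > 0" and u0: "u0 > 0"
  shows "ln (1 + 1 / u0) - (u - u0) / (u0 * (u0 + 1)) \<le> ln (1 + 1 / u)"
proof -
  define r where "r = (1 + 1 / u0) / (1 + 1 / u)"
  have pos: "1 + 1 / u > 0" "1 + 1 / u0 > 0" using u u0 by (simp_all add: add_pos_pos)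
  then have "ln (1 + 1 / u0) - ln (1 + 1 / u) = ln r"
    by (simp add: r_def ln_div)
  also have "\<dots> \<le> r - 1"
    using pos by (intro ln_le_minus_one) (simp add: r_def)
  also have "r - 1 = (u - u0) / (u0 * (u + 1))"
    using u u0 by (simp add: r_def divide_simps) (simp add: algebra_simps)
  also have "\<dots> = (u - u0) / (u0 * (u0 + 1)) - (u - u0)\<^sup>2 / (u0 * (u0 + 1) * (u + 1))"
    using u u0 by (simp add: divide_simps) (simp add: algebra_simps power2_eq_square)
  also have "\<dots> \<le> (u - u0) / (u0 * (u0 + 1))"
    using u u0 by simp
  finally show ?thesis by simp
qed

text \<open>Jensen's inequality for the convex decreasing function \<open>u \<mapsto> log\<^sub>2 (1 + 1/u)\<close>, via its
  tangent line at \<open>u\<^sub>0\<close>.\<close>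

lemma (in prob_space) log_one_plus_inverse_le_expectation:
  assumes u [measurable]: "u \<in> borel_measurable M" and pos: "AE x in M. u x > 0"
    and bound: "(\<integral>\<^sup>+x. ennreal (u x) \<partial>M) \<le> ennreal u0" and u0: "u0 > 0"
    and int: "integrable M (\<lambda>x. log 2 (1 + 1 / u x))"
  shows "log 2 (1 + 1 / u0) \<le> expectation (\<lambda>x. log 2 (1 + 1 / u x))"
proof -
  define d where "d = 1 / (ln 2 * u0 * (u0 + 1))"
  have nonneg: "AE x in M. 0 \<le> u x" using pos by eventually_elim simp
  have int_u: "integrable M u"
    using bound by (intro integrableI_nonneg[OF u nonneg]) (simp add: le_less_trans)
  have "expectation u \<le> u0"
    using bound u0 by (simp add: integral_eq_nn_integral[OF u nonneg] enn2real_leI)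
  moreover have "d > 0" using u0 by (simp add: d_def)
  ultimately have "log 2 (1 + 1 / u0) \<le> expectation (\<lambda>x. log 2 (1 + 1 / u0) - d * (u x - u0))"
    using int_u by (simp add: prob_space mult_le_0_iff)
  also have "\<dots> \<le> expectation (\<lambda>x. log 2 (1 + 1 / u x))"
  proof (rule integral_mono_AE)
    show "AE x in M. log 2 (1 + 1 / u0) - d * (u x - u0) \<le> log 2 (1 + 1 / u x)"
      using pos
    proof eventually_elim
      case (elim x)
      have "log 2 (1 + 1 / u0) - d * (u x - u0) = (ln (1 + 1 / u0) - (u x - u0) / (u0 * (u0 + 1))) / ln 2"
        by (simp add: log_def d_def diff_divide_distrib mult_ac)
      also have "\<dots> \<le> log 2 (1 + 1 / u x)"
        unfolding log_def by (intro divide_right_mono ln_one_plus_inverse_ge_tangent elim u0) simp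
      finally show ?case .
    qed
  qed (use int_u int in auto)
  finally show ?thesis .
qed

lemma log2_le_of_le_one_plus_sq:
  fixes w y :: real assumes y: "y \<ge> 0" and w: "1 \<le> w" "w \<le> 1 + y\<^sup>2"
  shows "log 2 w \<le> 2 / ln 2 * y"
proof -
  have "ln w \<le> ln ((1 + y)\<^sup>2)"
    using w y by (subst ln_le_cancel_iff) (auto simp: power2_eq_square algebra_simps)
  also have "\<dots> \<le> 2 * y"
    using y by (simp add: ln_realpow ln_add_one_self_le_self)
  finally show ?thesis by (simp add: log_def divide_right_mono)
qed

lemma integrable_col_sqnorm:
  assumes k: "k \<in> {1..K}"
  shows "integrable (H_dist M K) (col_sqnorm M k)"
proof (rule integrableI_nonneg)
  have entry: "(\<integral>\<^sup>+H. ennreal ((cmod (H (m, k)))\<^sup>2) \<partial>H_dist M K) = 1" if "m \<in> {1..M}" for m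
    using nn_integral_PiM_CN_std_linear[of "{1..M} \<times> {1..K}" "{(m, k)}" "\<lambda>_. 1"] that k
    by (simp add: H_dist_def)
  have "(\<integral>\<^sup>+H. ennreal (col_sqnorm M k H) \<partial>H_dist M K)
      = (\<integral>\<^sup>+H. (\<Sum>m\<in>{1..M}. ennreal ((cmod (H (m, k)))\<^sup>2)) \<partial>H_dist M K)"
    by (simp add: col_sqnorm_def sum_ennreal)
  also have "\<dots> = (\<Sum>m\<in>{1..M}. (\<integral>\<^sup>+H. ennreal ((cmod (H (m, k)))\<^sup>2) \<partial>H_dist M K))"
    using measurable_H_dist_entry[OF _ k] by (intro nn_integral_sum) auto
  finally show "(\<integral>\<^sup>+H. ennreal (col_sqnorm M k H) \<partial>H_dist M K) < \<infinity>"
    by (simp add: entry of_nat_less_top)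
qed (simp_all add: col_sqnorm_nonneg measurable_col_sqnorm[OF k])

definition inv_sinr :: "nat \<Rightarrow> real \<Rightarrow> (nat \<Rightarrow> real) \<Rightarrow> nat set \<Rightarrow> nat \<Rightarrow> (nat \<times> nat \<Rightarrow> complex) \<Rightarrow> real"
  where "inv_sinr M \<rho> \<beta> T k H =
    (\<rho> * (\<Sum>i\<in>T. (cmod (ginner M \<beta> H k i))\<^sup>2) + 1) / (\<rho> * (gnorm2 M \<beta> H k)\<^sup>2)"

lemma measurable_inv_sinr:
  assumes k: "k \<in> {1..K}" and T: "T \<subseteq> {1..K}"
  shows "inv_sinr M \<rho> \<beta> T k \<in> borel_measurable (H_dist M K)"
proof -
  have [measurable]: "(\<lambda>H. H (m, j)) \<in> borel_measurable (H_dist M K)"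
    if "m \<in> {1..M}" "j \<in> insert k T" for m j
    using that k T by (intro measurable_H_dist_entry) auto
  show ?thesis
    unfolding inv_sinr_def[abs_def] ginner_def gnorm2_def gcol_def
    by (intro borel_measurable_divide borel_measurable_add borel_measurable_times
        borel_measurable_sum borel_measurable_power borel_measurable_norm; measurable)
qed

lemma inv_sinr_eq:
  assumes \<rho>: "\<rho> > 0" and \<beta>: "\<beta> k > 0" "\<forall>i\<in>T. \<beta> i \<ge> 0" and a: "col_sqnorm M k H > 0"
  shows "inv_sinr M \<rho> \<beta> T k H
    = (\<Sum>i\<in>T. \<beta> i / \<beta> k * (col_inner_sqnorm M k i H * (1 / (col_sqnorm M k H)\<^sup>2)))
      + 1 / (\<rho> * (\<beta> k)\<^sup>2) * (1 / (col_sqnorm M k H)\<^sup>2)"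
proof -
  let ?a = "col_sqnorm M k H"
  have "(\<Sum>i\<in>T. (cmod (ginner M \<beta> H k i))\<^sup>2) = (\<Sum>i\<in>T. \<beta> k * \<beta> i * col_inner_sqnorm M k i H)"
    using \<beta> by (intro sum.cong refl cmod_ginner_sq_eq_col_inner_sqnorm) auto
  then have "inv_sinr M \<rho> \<beta> T k H
      = (\<Sum>i\<in>T. \<beta> k * \<beta> i * col_inner_sqnorm M k i H) / (\<beta> k * ?a)\<^sup>2 + 1 / (\<rho> * (\<beta> k * ?a)\<^sup>2)"
    using \<rho> \<beta> by (simp add: inv_sinr_def gnorm2_eq_col_sqnorm add_divide_distrib)
  also have "(\<Sum>i\<in>T. \<beta> k * \<beta> i * col_inner_sqnorm M k i H) / (\<beta> k * ?a)\<^sup>2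
      = (\<Sum>i\<in>T. \<beta> i / \<beta> k * (col_inner_sqnorm M k i H * (1 / ?a\<^sup>2)))"
    unfolding sum_divide_distrib using \<beta> by (intro sum.cong refl) (simp add: power2_eq_square)
  also have "1 / (\<rho> * (\<beta> k * ?a)\<^sup>2) = 1 / (\<rho> * (\<beta> k)\<^sup>2) * (1 / ?a\<^sup>2)"
    by (simp add: power_mult_distrib)
  finally show ?thesis .
qed

lemma nn_integral_inv_sinr_le:
  assumes M: "M \<ge> 3" and k: "k \<in> {1..K}" and T: "T \<subseteq> {1..K}" "k \<notin> T"
    and \<beta>: "\<beta> k > 0" "\<forall>i\<in>T. \<beta> i \<ge> 0" and \<rho>: "\<rho> > 0"
  shows "(\<integral>\<^sup>+H. ennreal (inv_sinr M \<rho> \<beta> T k H) \<partial>H_dist M K)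
    \<le> ennreal ((\<Sum>i\<in>T. \<beta> i / \<beta> k) / (real M - 1) + 1 / (\<rho> * (\<beta> k)\<^sup>2) / ((real M - 1) * (real M - 2)))"
proof -
  let ?a = "col_sqnorm M k" and ?b = "\<lambda>i. col_inner_sqnorm M k i"
  define c where "c = 1 / (\<rho> * (\<beta> k)\<^sup>2)"
  define p where "p = 1 / (real M - 1)"
  define q where "q = 1 / ((real M - 1) * (real M - 2))"
  have c: "c \<ge> 0" using \<rho> by (simp add: c_def)
  have pq: "p \<ge> 0" "q \<ge> 0" using M by (simp_all add: p_def q_def)
  have ratio: "\<beta> i / \<beta> k \<ge> 0" if "i \<in> T" for i using that \<beta> by simp
  have [measurable]: "?a \<in> borel_measurable (H_dist M K)"
    using k by (rule measurable_col_sqnorm)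
  have [measurable]: "?b i \<in> borel_measurable (H_dist M K)" if "i \<in> T" for i
    using that T k by (intro measurable_col_inner_sqnorm) auto
  have "AE H in H_dist M K. ?a H > 0"
    using M k by (intro AE_col_sqnorm_pos) auto
  then have "AE H in H_dist M K. ennreal (inv_sinr M \<rho> \<beta> T k H)
      = (\<Sum>i\<in>T. ennreal (\<beta> i / \<beta> k) * (ennreal (?b i H) * recip_sq_integral (?a H)))
        + ennreal c * recip_sq_integral (?a H)"
  proof eventually_elim
    case (elim H)
    have terms: "0 \<le> \<beta> i / \<beta> k * (?b i H * (1 / (?a H)\<^sup>2))" if "i \<in> T" for i
      using ratio[OF that] col_inner_sqnorm_nonneg by (intro mult_nonneg_nonneg) simp_all
    have "ennreal (inv_sinr M \<rho> \<beta> T k H)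
        = (\<Sum>i\<in>T. ennreal (\<beta> i / \<beta> k * (?b i H * (1 / (?a H)\<^sup>2)))) + ennreal (c * (1 / (?a H)\<^sup>2))"
      unfolding inv_sinr_eq[OF \<rho> \<beta> elim, folded c_def] using terms c
      by (subst ennreal_plus) (simp_all add: sum_ennreal sum_nonneg)
    also have "\<dots> = (\<Sum>i\<in>T. ennreal (\<beta> i / \<beta> k) * (ennreal (?b i H) * recip_sq_integral (?a H)))
        + ennreal c * recip_sq_integral (?a H)"
      unfolding recip_sq_integral_eq[OF elim] using ratio c
      by (intro arg_cong2[where f="(+)"] sum.cong refl)
         (simp_all add: ennreal_mult[symmetric] col_inner_sqnorm_nonneg)
    finally show ?case .
  qed
  then have "(\<integral>\<^sup>+H. ennreal (inv_sinr M \<rho> \<beta> T k H) \<partial>H_dist M K)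
      = (\<Sum>i\<in>T. ennreal (\<beta> i / \<beta> k) * (\<integral>\<^sup>+H. ennreal (?b i H) * recip_sq_integral (?a H) \<partial>H_dist M K))
        + ennreal c * (\<integral>\<^sup>+H. recip_sq_integral (?a H) \<partial>H_dist M K)"
    by (simp add: nn_integral_cong_AE nn_integral_add nn_integral_sum nn_integral_cmult)
  also have "\<dots> \<le> (\<Sum>i\<in>T. ennreal (\<beta> i / \<beta> k) * ennreal p) + ennreal c * ennreal q"
  proof (intro add_mono sum_mono mult_left_mono)
    fix i assume i: "i \<in> T"
    have "(\<integral>\<^sup>+H. ennreal (?b i H) * recip_sq_integral (?a H) \<partial>H_dist M K)
        = (\<integral>\<^sup>+H. ennreal (?a H) * recip_sq_integral (?a H) \<partial>H_dist M K)"
      using i T k by (intro nn_integral_col_inner_sqnorm_mult) auto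
    also have "\<dots> \<le> (\<integral>\<^sup>+H. recip_integral (?a H) \<partial>H_dist M K)"
      by (intro nn_integral_mono mult_recip_sq_integral_le col_sqnorm_nonneg)
    also have "\<dots> = ennreal p"
      unfolding p_def using M k by (intro nn_integral_recip_integral_col_sqnorm) auto
    finally show "(\<integral>\<^sup>+H. ennreal (?b i H) * recip_sq_integral (?a H) \<partial>H_dist M K) \<le> ennreal p" .
  qed (use M k nn_integral_recip_sq_integral_col_sqnorm in \<open>auto simp: q_def\<close>)
  also have "\<dots> = ennreal ((\<Sum>i\<in>T. \<beta> i / \<beta> k) * p + c * q)"
    using ratio pq c
    by (simp add: sum_distrib_right[symmetric] sum_ennreal ennreal_mult sum_nonneg ennreal_plus)
  finally show ?thesis by (simp add: c_def p_def q_def)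
qed

lemma integrable_log_one_plus_inverse_inv_sinr:
  assumes k: "k \<in> {1..K}" and T: "T \<subseteq> {1..K}"
    and \<beta>: "\<beta> k \<ge> 0" "\<forall>i\<in>T. \<beta> i \<ge> 0" and \<rho>: "\<rho> \<ge> 0"
  shows "integrable (H_dist M K) (\<lambda>H. log 2 (1 + 1 / inv_sinr M \<rho> \<beta> T k H))"
proof (rule Bochner_Integration.integrable_bound)
  show "integrable (H_dist M K) (\<lambda>H. 2 / ln 2 * sqrt \<rho> * \<beta> k * col_sqnorm M k H)"
    using integrable_col_sqnorm[OF k] by (intro integrable_mult_right)
  show "(\<lambda>H. log 2 (1 + 1 / inv_sinr M \<rho> \<beta> T k H)) \<in> borel_measurable (H_dist M K)"
    using measurable_inv_sinr[OF k T] by measurable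
  show "AE H in H_dist M K. norm (log 2 (1 + 1 / inv_sinr M \<rho> \<beta> T k H))
      \<le> norm (2 / ln 2 * sqrt \<rho> * \<beta> k * col_sqnorm M k H)"
  proof (rule AE_I2)
    fix H
    define S where "S = (\<Sum>i\<in>T. (cmod (ginner M \<beta> H k i))\<^sup>2)"
    define y where "y = sqrt \<rho> * \<beta> k * col_sqnorm M k H"
    have S: "S \<ge> 0" by (simp add: S_def sum_nonneg)
    have denom: "\<rho> * S + 1 > 0" using \<rho> S by (intro add_nonneg_pos mult_nonneg_nonneg) simp_all
    have y: "y \<ge> 0" using \<rho> \<beta> by (simp add: y_def col_sqnorm_nonneg)
    have ratio: "1 / inv_sinr M \<rho> \<beta> T k H = \<rho> * (gnorm2 M \<beta> H k)\<^sup>2 / (\<rho> * S + 1)"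
      by (simp add: inv_sinr_def S_def)
    have "\<rho> * (gnorm2 M \<beta> H k)\<^sup>2 / (\<rho> * S + 1) \<le> \<rho> * (gnorm2 M \<beta> H k)\<^sup>2"
      using divide_left_mono[of 1 "\<rho> * S + 1" "\<rho> * (gnorm2 M \<beta> H k)\<^sup>2"] \<rho> S denom by simp
    also have "\<dots> = y\<^sup>2"
      using \<rho> \<beta> by (simp add: y_def gnorm2_eq_col_sqnorm power_mult_distrib)
    finally have "log 2 (1 + 1 / inv_sinr M \<rho> \<beta> T k H) \<le> 2 / ln 2 * y"
      unfolding ratio using \<rho> S by (intro log2_le_of_le_one_plus_sq y) auto
    moreover have "0 \<le> \<rho> * (gnorm2 M \<beta> H k)\<^sup>2 / (\<rho> * S + 1)"
      using \<rho> denom by simp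
    then have "0 \<le> log 2 (1 + 1 / inv_sinr M \<rho> \<beta> T k H)"
      unfolding ratio by simp
    ultimately show "norm (log 2 (1 + 1 / inv_sinr M \<rho> \<beta> T k H))
        \<le> norm (2 / ln 2 * sqrt \<rho> * \<beta> k * col_sqnorm M k H)"
      using y by (simp add: y_def mult.assoc)
  qed
qed

lemma AE_inv_sinr_pos:
  assumes M: "M \<ge> 2" and k: "k \<in> {1..K}" and \<rho>: "\<rho> > 0" and \<beta>: "\<beta> k > 0"
  shows "AE H in H_dist M K. inv_sinr M \<rho> \<beta> T k H > 0"
  using AE_col_sqnorm_pos[OF M k]
proof eventually_elim
  case (elim H)
  have "\<rho> * (\<Sum>i\<in>T. (cmod (ginner M \<beta> H k i))\<^sup>2) + 1 > 0"
    using \<rho> by (intro add_nonneg_pos mult_nonneg_nonneg sum_nonneg) auto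
  with elim \<rho> \<beta> show ?case
    by (simp add: inv_sinr_def gnorm2_eq_col_sqnorm)
qed

lemma inverse_mean_bound_eq:
  fixes m Pr b s Sb :: real
  assumes m: "m > 2" and pos: "Pr > 0" "b > 0" "Sb > 0"
  shows "1 / (s / b / (m - 1) + 1 / (Pr / (m * Sb) * b\<^sup>2) / ((m - 1) * (m - 2)))
    = Pr * (m - 1) * (m - 2) * b\<^sup>2 / (Pr * (m - 2) * b * s + m * Sb)"
proof -
  define m1 m2 where "m1 = m - 1" and "m2 = m - 2"
  have "m1 > 0" "m2 > 0" "m > 0" using m by (simp_all add: m1_def m2_def)
  then have "s / b / m1 + 1 / (Pr / (m * Sb) * b\<^sup>2) / (m1 * m2)
      = (Pr * m2 * b * s + m * Sb) / (Pr * m1 * m2 * b\<^sup>2)"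
    using pos by (simp add: field_simps power2_eq_square)
  then show ?thesis by (simp add: m1_def m2_def)
qed

lemma jidx_in_Vset: "jidx K (int k) t \<in> Vset K k t"
  unfolding Vset_def by (rule CollectI, rule exI[of _ t]) simp

theorem proposition2:
  fixes M K k t :: nat and Pr :: real and \<beta> :: "nat \<Rightarrow> real"
  assumes "M \<ge> 3" and "K \<ge> 2" and "Pr > 0"
    and "\<forall>i\<in>{1..K}. \<beta> i > 0"
    and "k \<in> {1..K}" and "t \<in> {1..K-1}"
  shows "R_dl M K Pr \<beta> k t \<ge>
    log 2 (1 + Pr * (real M - 1) * (real M - 2) * (\<beta> k)\<^sup>2 /
      (Pr * (real M - 2) * \<beta> k * (\<Sum>i\<in>interf K k t. \<beta> i) + real M * (\<Sum>i\<in>{1..K}. \<beta> i)))"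
proof -
  interpret prob_space "H_dist M K" by (rule prob_space_H_dist)
  define T where "T = interf K k t"
  define Sb where "Sb = (\<Sum>i\<in>{1..K}. \<beta> i)"
  define \<rho> where "\<rho> = Pr / (real M * Sb)"
  define u0 where "u0 = (\<Sum>i\<in>T. \<beta> i / \<beta> k) / (real M - 1) + 1 / (\<rho> * (\<beta> k)\<^sup>2) / ((real M - 1) * (real M - 2))"
  have T: "T \<subseteq> {1..K}" "k \<notin> T"
    by (auto simp: T_def interf_def jidx_in_Vset)
  have \<beta>: "\<beta> k > 0" "\<forall>i\<in>T. \<beta> i \<ge> 0"
    using assms(4,5) T(1) by (auto intro: less_imp_le)
  have Sb: "Sb > 0" unfolding Sb_def using assms(2,4) by (intro sum_pos) auto
  have \<rho>: "\<rho> > 0" using assms(1,3) Sb by (simp add: \<rho>_def)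
  have u0: "u0 > 0" using assms(1) \<rho> \<beta> by (simp add: u0_def add_nonneg_pos sum_nonneg)
  have "log 2 (1 + 1 / u0) \<le> expectation (\<lambda>H. log 2 (1 + 1 / inv_sinr M \<rho> \<beta> T k H))"
    unfolding u0_def using assms(1,5) T \<beta> \<rho> u0[unfolded u0_def]
    by (intro log_one_plus_inverse_le_expectation measurable_inv_sinr AE_inv_sinr_pos
        integrable_log_one_plus_inverse_inv_sinr nn_integral_inv_sinr_le) auto
  also have "\<dots> = R_dl M K Pr \<beta> k t"
    unfolding R_dl_def Let_def inv_sinr_def Sb_def[symmetric] \<rho>_def[symmetric] T_def[symmetric]
    by simp
  finally show ?thesis
    using inverse_mean_bound_eq[of "real M" Pr "\<beta> k" Sb "\<Sum>i\<in>T. \<beta> i"] assms(1,3) \<beta> Sb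
    by (simp add: u0_def \<rho>_def Sb_def T_def sum_divide_distrib)
qed

end
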